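(* Let $X$ be a complex vector space equipped with an inner product $\langle\cdot,\cdot\rangle'$ with induced norm $\|x\|'=\sqrt{\langle x,x\rangle'}$. Suppose that for each $\alpha\in(0,1]$ we are given a map $\langle\cdot,\cdot\rangle_\alpha : X\times X\to\mathbb{C}$ and real constants $A_\alpha,B_\alpha$ with $0<A_\alpha\le B_\alpha<\infty$ such that for all $x,y\in X$ and all $\alpha\in(0,1]$, \[ A_\alpha\,|\langle x,y\rangle'| \le |\langle x,y\rangle_\alpha| \le B_\alpha\,|\langle x,y\rangle'|. \] For $x\in X$ put $\|x\|_\alpha=\sqrt{\langle x,x\rangle_\alpha}$ (any complex square root), so $|\|x\|_\alpha^2|=|\langle x,x\rangle_\alpha|$. Then for all $x,y\in X$ and all $\alpha\in(0,1]$: (i) (Fuzzy Cauchy–Schwarz) $\displaystyle |\langle x,y\rangle_\alpha|\le \frac{B_\alpha}{A_\alpha}\,\big|\|x\|_\alpha\|y\|_\alpha\big|$; (ii) (Fuzzy parallelogram inequality) \[ \frac{2A_\alpha}{B_\alpha}\big(|\|x\|_\alpha^2|+|\|y\|_\alpha^2|\big)\le |\|x+y\|_\alpha^2|+|\|x-y\|_\alpha^2|\le \frac{2B_\alpha}{A_\alpha}\big(|\|x\|_\alpha^2|+|\|y\|_\alpha^2|\big); \] (iii) (Fuzzy polarization inequality, real case) if $X$ is a real vector space and $\langle\cdot,\cdot\rangle'$ is a real inner product (the same bounds being assumed), then \[ |\|x+y\|_\alpha^2|\le \frac{B_\alpha}{A_\alpha}\big(4|\langle x,y\rangle_\alpha|+|\|x-y\|_\alpha^2|\big);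 \] (iv) (Fuzzy Bessel inequality) if $\{e_i\}_{i=1}^\infty$ is an orthonormal sequence in $X$ with respect to $\langle\cdot,\cdot\rangle'$, then \[ \sum_{i=1}^\infty |\langle x,e_i\rangle_\alpha|^2\le \frac{B_\alpha^2}{A_\alpha}\,|\|x\|_\alpha^2|. \]
   Context: The map $\langle\cdot,\cdot\rangle_\alpha$ satisfying the two-sided bound is the paper's (simplified) "fuzzy inner product" relative to the classical inner product $\langle\cdot,\cdot\rangle'$; $\|\cdot\|_\alpha$ is its induced fuzzy norm. *)

theory Defs
  imports "HOL-Analysis.Analysis"
begin

definition complex_inner_product ::
  "(complex \<Rightarrow> 'a::ab_group_add \<Rightarrow> 'a) \<Rightarrow> ('a \<Rightarrow> 'a \<Rightarrow> complex) \<Rightarrow> bool" where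
  "complex_inner_product sc ip \<longleftrightarrow>
     (\<forall>x y. ip x y = cnj (ip y x)) \<and>
     (\<forall>x y z. ip (x + y) z = ip x z + ip y z) \<and>
     (\<forall>c x y. ip (sc c x) y = c * ip x y) \<and>
     (\<forall>x. 0 \<le> Re (ip x x)) \<and>
     (\<forall>x. ip x x = 0 \<longrightarrow> x = 0)"

end

theory Submission
  imports Defs
begin

text \<open>Each inequality is the classical one for the inner product (Cauchy--Schwarz, the
  parallelogram law, the polarization identity, Bessel's inequality), transported to the fuzzy
  inner product through the two-sided bound: wherever the classical statement compares moduli,
  apply the upper bound on one side and the lower bound on the other, losing a factor B/A.
  In Bessel's inequality the squared coefficients cost B squared and the right-hand side 1/A,
  whence B squared over A. Polarization only uses that the form is biadditive and hermitian,
  so it holds for complex inner products as well.\<close>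

lemma mult_cnj_eq_cmod_power2: "z * cnj z = (complex_of_real (cmod z))\<^sup>2"
  by (simp flip: complex_norm_square)

locale hermitian_form =
  fixes g :: "'a::ab_group_add \<Rightarrow> 'a \<Rightarrow> complex"
  assumes conj_sym: "g x y = cnj (g y x)"
    and add_left: "g (x + y) z = g x z + g y z"
begin

lemma add_right: "g z (x + y) = g z x + g z y"
  by (subst (1 2 3) conj_sym) (simp add: add_left)

lemma diff_left: "g (x - y) z = g x z - g y z"
  using add_left[of "x - y" y z] by simp

lemma diff_right: "g z (x - y) = g z x - g z y"
  using add_right[of z "x - y" y] by simp

lemma zero_left: "g 0 y = 0"
  using diff_left[of 0 0 y] by simp

lemma zero_right: "g y 0 = 0"
  using diff_right[of y 0 0] by simp

lemma sum_left: "g (\<Sum>i\<in>S. u i) y = (\<Sum>i\<in>S. g (u i) y)"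
  by (induction S rule: infinite_finite_induct) (simp_all add: zero_left add_left)

lemma sum_right: "g y (\<Sum>i\<in>S. u i) = (\<Sum>i\<in>S. g y (u i))"
  using sum_left[of u S y] by (subst (1 2) conj_sym) (simp add: conj_sym[of y])

lemma cmod_commute: "cmod (g y x) = cmod (g x y)"
  by (subst conj_sym) simp

lemma parallelogram: "g (x + y) (x + y) + g (x - y) (x - y) = 2 * g x x + 2 * g y y"
  by (simp add: add_left add_right diff_left diff_right algebra_simps)

lemma polarization: "g (x + y) (x + y) = g (x - y) (x - y) + 2 * (g x y + g y x)"
  by (simp add: add_left add_right diff_left diff_right algebra_simps)

lemma polarization_cmod_le: "cmod (g (x + y) (x + y)) \<le> 4 * cmod (g x y) + cmod (g (x - y) (x - y))"
proof -
  have "cmod (g x y + g y x) \<le> 2 * cmod (g x y)"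
    using norm_triangle_ineq[of "g x y" "g y x"] by (simp add: cmod_commute)
  then have "cmod (2 * (g x y + g y x)) \<le> 4 * cmod (g x y)"
    by (simp only: norm_mult norm_numeral)
  moreover have "cmod (g (x + y) (x + y)) \<le> cmod (g (x - y) (x - y)) + cmod (2 * (g x y + g y x))"
    unfolding polarization by (rule norm_triangle_ineq)
  ultimately show ?thesis
    by linarith
qed

end

lemma hermitian_form_real_inner: "hermitian_form (\<lambda>x y::'a::real_inner. complex_of_real (x \<bullet> y))"
  by unfold_locales (auto simp: inner_add_left intro: inner_commute)

lemma hermitian_form_complex_inner_product: "complex_inner_product sc ip \<Longrightarrow> hermitian_form ip"
  unfolding complex_inner_product_def hermitian_form_def by (elim conjE) (intro conjI)

locale complex_inner_product_space =
  fixes sc :: "complex \<Rightarrow> 'a::ab_group_add \<Rightarrow> 'a" and ip :: "'a \<Rightarrow> 'a \<Rightarrow> complex"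
  assumes complex_inner_product: "complex_inner_product sc ip"
begin

sublocale hermitian_form ip
  using complex_inner_product by (rule hermitian_form_complex_inner_product)

lemma scale_left: "ip (sc c x) y = c * ip x y"
  using complex_inner_product unfolding complex_inner_product_def by (elim conjE allE)

lemma scale_right: "ip x (sc c y) = cnj c * ip x y"
  by (subst (1 2) conj_sym) (simp add: scale_left)

lemma self_nonneg: "0 \<le> Re (ip x x)"
  using complex_inner_product unfolding complex_inner_product_def by (elim conjE allE)

lemma self_eq_0D: "ip x x = 0 \<Longrightarrow> x = 0"
  using complex_inner_product unfolding complex_inner_product_def by (elim conjE allE impE)

lemma self_real: "ip x x = of_real (Re (ip x x))"
  using conj_sym[of x x] by (simp add: complex_eq_iff)

lemma cmod_self: "cmod (ip x x) = Re (ip x x)"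
  by (subst self_real) (simp add: self_nonneg)

lemma parallelogram_cmod:
  "cmod (ip (x + y) (x + y)) + cmod (ip (x - y) (x - y)) = 2 * (cmod (ip x x) + cmod (ip y y))"
  using arg_cong[OF parallelogram[of x y], of Re] by (simp add: cmod_self)

lemma cauchy_schwarz: "(cmod (ip x y))\<^sup>2 \<le> Re (ip x x) * Re (ip y y)"
proof (cases "y = 0")
  case True
  then show ?thesis
    by (simp add: zero_right)
next
  case False
  define r where "r = Re (ip y y)"
  define a where "a = ip x y"
  define t where "t = a / of_real r"
  have yy: "ip y y = of_real r"
    unfolding r_def by (rule self_real)
  have "r \<noteq> 0"
    using False self_eq_0D yy by auto
  then have r: "r > 0"
    using self_nonneg[of y] by (simp add: r_def)
  have yx: "ip y x = cnj a"
    unfolding a_def by (rule conj_sym)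
  have "ip (x - sc t y) (x - sc t y) = ip x x - cnj t * a - t * cnj a + t * cnj t * ip y y"
    by (simp add: diff_left diff_right scale_left scale_right a_def yx algebra_simps)
  also have "\<dots> = ip x x - of_real ((cmod a)\<^sup>2 / r)"
    using r by (simp add: yy t_def field_simps mult_cnj_eq_cmod_power2)
  finally have "0 \<le> Re (ip x x) - (cmod a)\<^sup>2 / r"
    using self_nonneg[of "x - sc t y"] by simp
  then show ?thesis
    using r by (simp add: a_def r_def field_simps)
qed

lemma bessel_partial:
  fixes e :: "nat \<Rightarrow> 'a"
  assumes orthonormal: "\<And>i j. ip (e i) (e j) = (if i = j then 1 else 0)"
  shows "(\<Sum>i<n. (cmod (ip x (e i)))\<^sup>2) \<le> Re (ip x x)"
proof -
  define c where "c i = ip x (e i)" for i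
  define s where "s = (\<Sum>i<n. (cmod (c i))\<^sup>2)"
  define p where "p = (\<Sum>i<n. sc (c i) (e i))"
  have p_left: "ip p z = (\<Sum>i<n. c i * ip (e i) z)" for z
    by (simp add: p_def sum_left scale_left)
  have p_e: "ip p (e j) = c j" if "j < n" for j
  proof -
    have "ip p (e j) = (\<Sum>i<n. if i = j then c i else 0)"
      unfolding p_left by (rule sum.cong) (simp_all add: orthonormal)
    also have "\<dots> = c j"
      using that by simp
    finally show ?thesis .
  qed
  have x_p: "ip x p = of_real s"
    by (simp add: p_def s_def sum_right scale_right c_def mult_cnj_eq_cmod_power2 mult.commute)
  have p_p: "ip p p = of_real s"
  proof -
    have "ip p p = (\<Sum>i<n. c i * cnj (c i))"
      unfolding p_left[of p] by (rule sum.cong) (simp_all add: conj_sym[of "e _" p] p_e)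
    also have "\<dots> = of_real s"
      by (simp add: s_def mult_cnj_eq_cmod_power2)
    finally show ?thesis .
  qed
  have "ip (x - p) (x - p) = ip x x - of_real s"
    using x_p p_p conj_sym[of p x] by (simp add: diff_left diff_right)
  then show ?thesis
    using self_nonneg[of "x - p"] by (simp add: s_def c_def)
qed

lemma bessel:
  fixes e :: "nat \<Rightarrow> 'a"
  assumes orthonormal: "\<And>i j. ip (e i) (e j) = (if i = j then 1 else 0)"
  shows bessel_summable: "summable (\<lambda>i. (cmod (ip x (e i)))\<^sup>2)"
    and bessel_suminf_le: "(\<Sum>i. (cmod (ip x (e i)))\<^sup>2) \<le> Re (ip x x)"
proof -
  have partial: "(\<Sum>i<n. (cmod (ip x (e i)))\<^sup>2) \<le> Re (ip x x)" for n
    using orthonormal by (rule bessel_partial)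
  show summable: "summable (\<lambda>i. (cmod (ip x (e i)))\<^sup>2)"
    using partial by (intro summableI_nonneg_bounded) auto
  show "(\<Sum>i. (cmod (ip x (e i)))\<^sup>2) \<le> Re (ip x x)"
    using summable partial by (rule suminf_le_const)
qed

end

locale fuzzy_form = hermitian_form g for g :: "'a::ab_group_add \<Rightarrow> 'a \<Rightarrow> complex" +
  fixes f :: "'a \<Rightarrow> 'a \<Rightarrow> complex" and a b :: real
  assumes lower_pos: "0 < a"
    and lower_le_upper: "a \<le> b"
    and lower_bound: "a * cmod (g x y) \<le> cmod (f x y)"
    and upper_bound: "cmod (f x y) \<le> b * cmod (g x y)"
begin

lemma upper_pos: "0 < b"
  using lower_pos lower_le_upper by linarith

lemma fuzzy_polarization:
  "cmod (f (x + y) (x + y)) \<le> b / a * (4 * cmod (f x y) + cmod (f (x - y) (x - y)))"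
proof -
  have "cmod (f (x + y) (x + y)) \<le> b * cmod (g (x + y) (x + y))"
    by (rule upper_bound)
  also have "\<dots> \<le> b * (4 * cmod (g x y) + cmod (g (x - y) (x - y)))"
    using polarization_cmod_le upper_pos by (intro mult_left_mono) auto
  also have "\<dots> = b / a * (4 * (a * cmod (g x y)) + a * cmod (g (x - y) (x - y)))"
    using lower_pos by (simp add: field_simps)
  also have "\<dots> \<le> b / a * (4 * cmod (f x y) + cmod (f (x - y) (x - y)))"
    using lower_pos upper_pos lower_bound by (intro mult_left_mono add_mono) auto
  finally show ?thesis .
qed

end

lemma fuzzy_form_real_inner:
  fixes f :: "'a::real_inner \<Rightarrow> 'a \<Rightarrow> complex"
  assumes "0 < a" "a \<le> b"
    and "\<And>x y. a * \<bar>x \<bullet> y\<bar> \<le> cmod (f x y) \<and> cmod (f x y) \<le> b * \<bar>x \<bullet> y\<bar>"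
  shows "fuzzy_form (\<lambda>x y. complex_of_real (x \<bullet> y)) f a b"
  using assms by (intro fuzzy_form.intro[OF hermitian_form_real_inner] fuzzy_form_axioms.intro) auto

locale fuzzy_inner_product = complex_inner_product_space sc ip + fuzzy_form ip f a b
  for sc ip f a b
begin

lemma fuzzy_cauchy_schwarz: "cmod (f x y) \<le> b / a * sqrt (cmod (f x x) * cmod (f y y))"
proof -
  have sqrt_scale: "sqrt ((a * u) * (a * v)) = a * sqrt (u * v)" for u v
    using lower_pos by (simp add: real_sqrt_mult power2_eq_square[symmetric] algebra_simps)
  have "cmod (f x y) \<le> b * cmod (ip x y)"
    by (rule upper_bound)
  also have "\<dots> \<le> b * sqrt (cmod (ip x x) * cmod (ip y y))"
    using cauchy_schwarz[of x y] upper_pos by (intro mult_left_mono real_le_rsqrt) (auto simp: cmod_self)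
  also have "\<dots> = b / a * sqrt ((a * cmod (ip x x)) * (a * cmod (ip y y)))"
    using lower_pos by (simp add: sqrt_scale)
  also have "\<dots> \<le> b / a * sqrt (cmod (f x x) * cmod (f y y))"
    using lower_pos upper_pos lower_bound
    by (intro mult_left_mono real_sqrt_le_mono mult_mono) auto
  finally show ?thesis .
qed

lemma fuzzy_parallelogram_lower:
  "2 * a / b * (cmod (f x x) + cmod (f y y))
     \<le> cmod (f (x + y) (x + y)) + cmod (f (x - y) (x - y))"
proof -
  have "2 * a / b * (cmod (f x x) + cmod (f y y))
      \<le> 2 * a / b * (b * cmod (ip x x) + b * cmod (ip y y))"
    using lower_pos upper_pos upper_bound by (intro mult_left_mono add_mono) auto
  also have "\<dots> = a * (2 * (cmod (ip x x) + cmod (ip y y)))"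
    using upper_pos by (simp add: field_simps)
  also have "\<dots> = a * cmod (ip (x + y) (x + y)) + a * cmod (ip (x - y) (x - y))"
    by (simp only: parallelogram_cmod flip: distrib_left)
  also have "\<dots> \<le> cmod (f (x + y) (x + y)) + cmod (f (x - y) (x - y))"
    by (intro add_mono lower_bound)
  finally show ?thesis .
qed

lemma fuzzy_parallelogram_upper:
  "cmod (f (x + y) (x + y)) + cmod (f (x - y) (x - y))
     \<le> 2 * b / a * (cmod (f x x) + cmod (f y y))"
proof -
  have "cmod (f (x + y) (x + y)) + cmod (f (x - y) (x - y))
      \<le> b * cmod (ip (x + y) (x + y)) + b * cmod (ip (x - y) (x - y))"
    by (intro add_mono upper_bound)
  also have "\<dots> = b * (2 * (cmod (ip x x) + cmod (ip y y)))"
    by (simp only: parallelogram_cmod flip: distrib_left)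
  also have "\<dots> = 2 * b / a * (a * cmod (ip x x) + a * cmod (ip y y))"
    using lower_pos by (simp add: field_simps)
  also have "\<dots> \<le> 2 * b / a * (cmod (f x x) + cmod (f y y))"
    using lower_pos upper_pos lower_bound by (intro mult_left_mono add_mono) auto
  finally show ?thesis .
qed

context
  fixes e :: "nat \<Rightarrow> 'a"
  assumes orthonormal: "\<And>i j. ip (e i) (e j) = (if i = j then 1 else 0)"
begin

lemma fuzzy_bessel_term_le: "(cmod (f x (e i)))\<^sup>2 \<le> b\<^sup>2 * (cmod (ip x (e i)))\<^sup>2"
  using upper_bound[of x "e i"] by (simp add: power_mult_distrib[symmetric] power_mono)

lemma fuzzy_bessel_summable: "summable (\<lambda>i. (cmod (f x (e i)))\<^sup>2)"
  using summable_mult[OF bessel_summable[OF orthonormal, of x], of "b\<^sup>2"]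
  by (rule summable_comparison_test'[where N = 0]) (simp add: fuzzy_bessel_term_le)

lemma fuzzy_bessel: "(\<Sum>i. (cmod (f x (e i)))\<^sup>2) \<le> b\<^sup>2 / a * cmod (f x x)"
proof -
  have "(\<Sum>i. (cmod (f x (e i)))\<^sup>2) \<le> (\<Sum>i. b\<^sup>2 * (cmod (ip x (e i)))\<^sup>2)"
    using fuzzy_bessel_term_le fuzzy_bessel_summable
      summable_mult[OF bessel_summable[OF orthonormal, of x], of "b\<^sup>2"]
    by (rule suminf_le)
  also have "\<dots> = b\<^sup>2 * (\<Sum>i. (cmod (ip x (e i)))\<^sup>2)"
    using bessel_summable[OF orthonormal] by (rule suminf_mult)
  also have "\<dots> \<le> b\<^sup>2 / a * (a * cmod (ip x x))"
    using mult_left_mono[OF bessel_suminf_le[OF orthonormal, of x], of "b\<^sup>2"] lower_pos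
    by (simp add: cmod_self)
  also have "\<dots> \<le> b\<^sup>2 / a * cmod (f x x)"
    using lower_pos lower_bound by (intro mult_left_mono) auto
  finally show ?thesis .
qed

end

end

theorem mainTheorem3:
  fixes sc :: "complex \<Rightarrow> 'a::ab_group_add \<Rightarrow> 'a"
    and ip :: "'a \<Rightarrow> 'a \<Rightarrow> complex"
    and fip :: "real \<Rightarrow> 'a \<Rightarrow> 'a \<Rightarrow> complex"
    and nrm :: "real \<Rightarrow> 'a \<Rightarrow> complex"
    and A B :: "real \<Rightarrow> real"
  assumes vs: "vector_space sc"
    and ip: "complex_inner_product sc ip"
    and AB: "\<And>\<alpha>. \<alpha> \<in> {0<..1} \<Longrightarrow> 0 < A \<alpha> \<and> A \<alpha> \<le> B \<alpha>"
    and bounds: "\<And>\<alpha> x y. \<alpha> \<in> {0<..1} \<Longrightarrow>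
        A \<alpha> * cmod (ip x y) \<le> cmod (fip \<alpha> x y) \<and> cmod (fip \<alpha> x y) \<le> B \<alpha> * cmod (ip x y)"
    and nrm: "\<And>\<alpha> x. (nrm \<alpha> x)\<^sup>2 = fip \<alpha> x x"
  shows
    \<comment> \<open>(i) fuzzy Cauchy--Schwarz\<close>
    "(\<forall>\<alpha>\<in>{0<..1}. \<forall>x y.
        cmod (fip \<alpha> x y) \<le> B \<alpha> / A \<alpha> * cmod (nrm \<alpha> x * nrm \<alpha> y))
   \<and> \<comment> \<open>(ii) fuzzy parallelogram inequality\<close>
     (\<forall>\<alpha>\<in>{0<..1}. \<forall>x y.
        2 * A \<alpha> / B \<alpha> * (cmod ((nrm \<alpha> x)\<^sup>2) + cmod ((nrm \<alpha> y)\<^sup>2))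
          \<le> cmod ((nrm \<alpha> (x + y))\<^sup>2) + cmod ((nrm \<alpha> (x - y))\<^sup>2)
      \<and> cmod ((nrm \<alpha> (x + y))\<^sup>2) + cmod ((nrm \<alpha> (x - y))\<^sup>2)
          \<le> 2 * B \<alpha> / A \<alpha> * (cmod ((nrm \<alpha> x)\<^sup>2) + cmod ((nrm \<alpha> y)\<^sup>2)))
   \<and> \<comment> \<open>(iii) fuzzy polarization inequality, real case\<close>
     (\<forall>(fipr :: real \<Rightarrow> 'b::real_inner \<Rightarrow> 'b \<Rightarrow> complex) (nrmr :: real \<Rightarrow> 'b \<Rightarrow> complex)
        (Ar :: real \<Rightarrow> real) Br.
        (\<forall>\<alpha>\<in>{0<..1}. 0 < Ar \<alpha> \<and> Ar \<alpha> \<le> Br \<alpha>) \<longrightarrow>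
        (\<forall>\<alpha>\<in>{0<..1}. \<forall>x y. Ar \<alpha> * \<bar>x \<bullet> y\<bar> \<le> cmod (fipr \<alpha> x y)
                              \<and> cmod (fipr \<alpha> x y) \<le> Br \<alpha> * \<bar>x \<bullet> y\<bar>) \<longrightarrow>
        (\<forall>\<alpha> x. (nrmr \<alpha> x)\<^sup>2 = fipr \<alpha> x x) \<longrightarrow>
        (\<forall>\<alpha>\<in>{0<..1}. \<forall>x y.
           cmod ((nrmr \<alpha> (x + y))\<^sup>2)
             \<le> Br \<alpha> / Ar \<alpha> * (4 * cmod (fipr \<alpha> x y) + cmod ((nrmr \<alpha> (x - y))\<^sup>2))))
   \<and> \<comment> \<open>(iv) fuzzy Bessel inequality\<close>
     (\<forall>e :: nat \<Rightarrow> 'a. (\<forall>i j. ip (e i) (e j) = (if i = j then 1 else 0)) \<longrightarrow>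
        (\<forall>\<alpha>\<in>{0<..1}. \<forall>x.
           summable (\<lambda>i. (cmod (fip \<alpha> x (e i)))\<^sup>2)
         \<and> (\<Sum>i. (cmod (fip \<alpha> x (e i)))\<^sup>2) \<le> (B \<alpha>)\<^sup>2 / A \<alpha> * cmod ((nrm \<alpha> x)\<^sup>2)))"
proof -
  have fuzzy: "fuzzy_inner_product sc ip (fip \<alpha>) (A \<alpha>) (B \<alpha>)" if "\<alpha> \<in> {0<..1}" for \<alpha>
    using ip AB[OF that] bounds[OF that]
    by (intro fuzzy_inner_product.intro complex_inner_product_space.intro fuzzy_form.intro
        fuzzy_form_axioms.intro hermitian_form_complex_inner_product) auto
  have nrm_sq: "cmod ((nrm \<alpha> x)\<^sup>2) = cmod (fip \<alpha> x x)" for \<alpha> x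
    by (simp add: nrm)
  have nrm_mult: "cmod (nrm \<alpha> x * nrm \<alpha> y) = sqrt (cmod (fip \<alpha> x x) * cmod (fip \<alpha> y y))"
    for \<alpha> x y
    by (simp add: norm_mult real_sqrt_mult norm_power flip: nrm)
  show ?thesis
    apply (intro conjI ballI allI impI)
    subgoal for \<alpha> x y
      using fuzzy_inner_product.fuzzy_cauchy_schwarz[OF fuzzy] by (simp add: nrm_mult)
    subgoal for \<alpha> x y
      using fuzzy_inner_product.fuzzy_parallelogram_lower[OF fuzzy] by (simp add: nrm_sq)
    subgoal for \<alpha> x y
      using fuzzy_inner_product.fuzzy_parallelogram_upper[OF fuzzy] by (simp add: nrm_sq)
    subgoal for fipr nrmr Ar Br \<alpha> x y
      using fuzzy_form.fuzzy_polarization[OF fuzzy_form_real_inner, of "Ar \<alpha>" "Br \<alpha>" "fipr \<alpha>"]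
      by simp
    subgoal for e \<alpha> x
      using fuzzy_inner_product.fuzzy_bessel_summable[OF fuzzy] by simp
    subgoal for e \<alpha> x
      using fuzzy_inner_product.fuzzy_bessel[OF fuzzy] by (simp add: nrm_sq)
    done
qed

end
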